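(* In the setting of the context, let $\underline b^{j}$ denote the lowest bid in the $n_j$-bidder auction and, for $\gamma\in[0,1]$, let $b^j_\gamma$ be the $\gamma$-quantile of $G(\cdot\mid n_j)$, $j=1,2$. Then $$\theta=\frac{n_2(n_1-1)g(\underline b^{2}\mid n_2)-n_1(n_2-1)g(\underline b^{1}\mid n_1)}{(n_1-1)g(\underline b^{2}\mid n_2)-(n_2-1)g(\underline b^{1}\mid n_1)},$$ the function $H(\gamma):=D(\gamma)/D'(\gamma)$ satisfies $$H(\gamma)=\frac{b^2_\gamma-b^1_\gamma}{1-\theta}\left[\frac{1}{(n_1-1)g(b^1_\gamma\mid n_1)}-\frac{1}{(n_2-1)g(b^2_\gamma\mid n_2)}\right]^{-1},$$ $D(\gamma)=\exp\!\left[-\int_\gamma^1 \frac{dt}{H(t)}\right]$, and the $\gamma$-quantile $v_\gamma$ of $F_0$ satisfies, for $j=1,2$, $$v_\gamma=b^j_\gamma+\frac{(1-\theta)H(\gamma)}{(n_j-1)g(b^j_\gamma\mid n_j)}.$$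
   Context: First-price auctions (no reserve price) with $n\in\{n_1,n_2\}$ bidders, $2\le n_1<n_2$. Bidders' values are i.i.d. from $F_0$ on $[\underline v,\overline v]$ with continuous density $f_0>0$. Utility is CRRA, $u(w)=w^{1-\theta}/(1-\theta)$, $\theta\in[0,1)$. Bidders have maxmin expected utility over a weakly compact convex set $\Gamma$ of strictly increasing $C^1$ distributions on $[\underline v,\overline v]$ containing $F_0$ with least element $F^*\in\Gamma$ ($F^*\le F$ pointwise for all $F\in\Gamma$) having density $f^*>0$; $D(\gamma):=F^*(F_0^{-1}(\gamma))$, which is strictly increasing, $C^1$, with $D(0)=0$, $D(1)=1$, $D'(0)>0$. $F_0$ and $\Gamma$ do not depend on $n$ (exogenous participation). For $n$ bidders the symmetric equilibrium is a strictly increasing differentiable $\beta_n$ such that for every value $v$, $x=v$ maximizes $u[v-\beta_n(x)]D[F_0(x)]^{n-1}$; $G(\cdot\mid n)$ is the distribution of $\beta_n(v)$, $v\sim F_0$, with density $g(\cdot\mid n)$, assumed positive and continuous on its support, and $\underline b^j=\beta_{n_j}(\underline v)$. *)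

theory Defs
  imports "HOL-Analysis.Analysis"
begin

definition crra :: "real \<Rightarrow> real \<Rightarrow> real" where
  "crra \<theta> w = (if 0 \<le> w then w powr (1 - \<theta>) / (1 - \<theta>)
                else - ((- w) powr (1 - \<theta>)) / (1 - \<theta>))"

definition C1_cdf_on :: "real \<Rightarrow> real \<Rightarrow> (real \<Rightarrow> real) \<Rightarrow> (real \<Rightarrow> real) \<Rightarrow> bool" where
  "C1_cdf_on a b F f \<longleftrightarrow> F a = 0 \<and> F b = 1 \<and> strict_mono_on {a..b} F \<and>
     continuous_on {a..b} f \<and>
     (\<forall>x\<in>{a..b}. (F has_real_derivative f x) (at x within {a..b}))"

definition bid_cdf :: "(real \<Rightarrow> real) \<Rightarrow> real \<Rightarrow> real \<Rightarrow> (real \<Rightarrow> real) \<Rightarrow> real \<Rightarrow> real" where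
  "bid_cdf F0 vl vh \<beta> b =
     (if b < \<beta> vl then 0 else if \<beta> vh \<le> b then 1
      else F0 (the_inv_into {vl..vh} \<beta> b))"

definition quantile_on :: "real \<Rightarrow> real \<Rightarrow> (real \<Rightarrow> real) \<Rightarrow> real \<Rightarrow> real" where
  "quantile_on lo hi F \<gamma> = (THE x. x \<in> {lo..hi} \<and> F x = \<gamma>)"

definition bid_quantile :: "(real \<Rightarrow> real) \<Rightarrow> real \<Rightarrow> real \<Rightarrow> (real \<Rightarrow> real) \<Rightarrow> real \<Rightarrow> real" where
  "bid_quantile F0 vl vh \<beta> \<gamma> = quantile_on (\<beta> vl) (\<beta> vh) (bid_cdf F0 vl vh \<beta>) \<gamma>"

definition sym_equilibrium ::
  "real \<Rightarrow> real \<Rightarrow> real \<Rightarrow> (real \<Rightarrow> real) \<Rightarrow> (real \<Rightarrow> real) \<Rightarrow> nat \<Rightarrow> (real \<Rightarrow> real) \<Rightarrow> bool" where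
  "sym_equilibrium \<theta> vl vh F0 D n \<beta> \<longleftrightarrow>
     strict_mono_on {vl..vh} \<beta> \<and>
     (\<forall>x\<in>{vl..vh}. \<beta> differentiable (at x within {vl..vh})) \<and>
     (\<forall>v\<in>{vl..vh}. \<forall>x\<in>{vl..vh}.
        crra \<theta> (v - \<beta> x) * D (F0 x) ^ (n - 1) \<le> crra \<theta> (v - \<beta> v) * D (F0 v) ^ (n - 1))"

end

theory Submission
  imports Defs
begin

text \<open>For each number n of bidders the equilibrium bid satisfies \<open>\<beta> vl = vl\<close> and, from the
  stationarity of the bidder's log payoff, the first-order condition
  \<open>(1 - \<theta>) D(F0 v) = (v - \<beta> v) (n - 1) D'(F0 v) g(\<beta> v)\<close>.  Read at the \<gamma>-quantile this is
  \<open>v\<^sub>\<gamma> = b\<^sub>\<gamma> + (1 - \<theta>) H(\<gamma>) / ((n - 1) g(b\<^sub>\<gamma>))\<close>; subtracting the instances for n1 and n2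
  identifies H, provided the bids strictly increase with n above vl.  They do: the two bid curves
  start together at vl, and wherever they meet the one for more bidders is steeper.  Letting
  \<open>v \<rightarrow> vl\<close> in the first-order condition gives \<open>(n - 1) g(vl) = f0(vl) (n - \<theta>)\<close>, and its two
  instances identify \<theta>.  Finally \<open>1/H\<close> is the logarithmic derivative of D and \<open>D 1 = 1\<close>.\<close>

lemma nonneg_on_Icc_if_nonneg_on_Ioo:
  fixes f :: "real \<Rightarrow> real"
  assumes "a < b" "continuous_on {a..b} f" "\<And>x. x \<in> {a<..<b} \<Longrightarrow> 0 \<le> f x"
    and "x \<in> {a..b}"
  shows "0 \<le> f x"
proof -
  have "closed ({a..b} \<inter> f -` {0..})"
    by (rule continuous_closed_preimage) (use assms in auto)
  moreover have "{a<..<b} \<subseteq> {a..b} \<inter> f -` {0..}" using assms(3) by auto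
  ultimately have "closure {a<..<b} \<subseteq> {a..b} \<inter> f -` {0..}" by (rule closure_minimal[rotated])
  then show ?thesis using assms(1,4) by auto
qed

lemma eq_on_Icc_if_eq_on_Ioo:
  fixes f g :: "real \<Rightarrow> real"
  assumes "a < b" "continuous_on {a..b} f" "continuous_on {a..b} g"
    and "\<And>x. x \<in> {a<..<b} \<Longrightarrow> f x = g x" and "x \<in> {a..b}"
  shows "f x = g x"
proof -
  have "0 \<le> f x - g x" "0 \<le> g x - f x"
    using nonneg_on_Icc_if_nonneg_on_Ioo[OF assms(1) continuous_on_diff] assms by fastforce+
  then show ?thesis by simp
qed

lemma DERIV_mult_vanishing:
  fixes f g :: "real \<Rightarrow> real"
  assumes "(f has_real_derivative f') (at x within S)" "f x = 0"
    and "continuous (at x within S) g"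
  shows "((\<lambda>y. f y * g y) has_real_derivative f' * g x) (at x within S)"
proof -
  have "((\<lambda>y. (f y - f x) / (y - x) * g y) \<longlongrightarrow> f' * g x) (at x within S)"
    using assms(1,3) unfolding has_field_derivative_iff continuous_within
    by (rule tendsto_mult)
  then show ?thesis
    unfolding has_field_derivative_iff using assms(2) by (simp add: field_simps)
qed

text \<open>The first root after a point where \<open>\<delta> > 0\<close> would be approached from below, since the
  derivative there is positive; the intermediate value theorem then yields an earlier root.\<close>
lemma pos_on_Ioc_if_deriv_pos_at_roots:
  fixes \<delta> d :: "real \<Rightarrow> real"
  assumes ab: "a < b" and cont: "continuous_on {a..b} \<delta>" and root: "\<delta> a = 0"
    and deriv: "\<And>z. z \<in> {a..b} \<Longrightarrow> \<delta> z = 0 \<Longrightarrow>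
       (\<delta> has_real_derivative d z) (at z within {a..b}) \<and> 0 < d z"
    and p: "p \<in> {a<..b}"
  shows "0 < \<delta> p"
proof (rule ccontr)
  assume np: "\<not> 0 < \<delta> p"
  obtain \<eta> where \<eta>: "0 < \<eta>" "\<And>h. 0 < h \<Longrightarrow> a + h \<in> {a..b} \<Longrightarrow> h < \<eta> \<Longrightarrow> \<delta> a < \<delta> (a + h)"
    using has_real_derivative_pos_inc_right deriv[OF _ root] ab by fastforce
  obtain c where c: "a < c" "c < p" "0 < \<delta> c"
  proof -
    obtain h where "0 < h" "h < \<eta>" "h < p - a"
      using field_lbound_gt_zero[of \<eta> "p - a"] \<eta>(1) p by auto
    then show ?thesis using that[of "a + h"] \<eta>(2)[of h] p root by auto
  qed
  have cont_cp: "continuous_on {c..p} \<delta>"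
    by (rule continuous_on_subset[OF cont]) (use c p in auto)
  define T where "T = {x \<in> {c..p}. \<delta> x = 0}"
  have "T \<noteq> {}" using IVT2'[of \<delta> p 0 c, OF _ _ _ cont_cp] np c by (auto simp: T_def)
  moreover have "bdd_below T" by (auto simp: T_def intro: bdd_belowI[of _ c])
  moreover have "closed T"
    unfolding T_def by (rule continuous_closed_preimage_constant[OF cont_cp]) auto
  ultimately have zT: "Inf T \<in> T" by (rule closed_contains_Inf)
  define z where "z = Inf T"
  have z: "c < z" "z \<le> p" "\<delta> z = 0"
    using zT c(3) by (auto simp: z_def T_def order_le_less)
  obtain h where h: "0 < h" "c \<le> z - h" "\<delta> (z - h) < 0"
  proof -
    obtain e where e: "0 < e" "\<And>h. 0 < h \<Longrightarrow> z - h \<in> {a..b} \<Longrightarrow> h < e \<Longrightarrow> \<delta> (z - h) < \<delta> z"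
      using has_real_derivative_pos_inc_left deriv[of z] z c p by fastforce
    obtain h where "0 < h" "h < e" "h < z - c"
      using field_lbound_gt_zero[of e "z - c"] e(1) z(1) by auto
    then show ?thesis using that[of h] e(2)[of h] z c p by auto
  qed
  obtain y where y: "c \<le> y" "y \<le> z - h" "\<delta> y = 0"
    using IVT2'[of \<delta> "z - h" 0 c] h c z
      continuous_on_subset[OF cont_cp, of "{c..z - h}"] by fastforce
  then have "y \<in> T" using z h by (auto simp: T_def)
  then have "z \<le> y" unfolding z_def by (rule cInf_lower) (auto simp: T_def intro: bdd_belowI[of _ c])
  then show False using y h by simp
qed

lemma exp_neg_integral_logderiv:
  fixes f f' :: "real \<Rightarrow> real"
  assumes deriv: "\<And>t. t \<in> {x..b} \<Longrightarrow> (f has_real_derivative f' t) (at t within {x..b})"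
    and pos: "\<And>t. t \<in> {x..b} \<Longrightarrow> 0 < f t" and "x \<le> b"
  shows "f x = f b * exp (- integral {x..b} (\<lambda>t. f' t / f t))"
proof -
  have "((\<lambda>t. f' t / f t) has_integral (ln (f b) - ln (f x))) {x..b}"
  proof (rule fundamental_theorem_of_calculus[OF \<open>x \<le> b\<close>])
    fix t assume t: "t \<in> {x..b}"
    have "((\<lambda>t. ln (f t)) has_real_derivative f' t / f t) (at t within {x..b})"
      using DERIV_chain2[OF DERIV_ln[OF pos[OF t]] deriv[OF t]] by (simp add: field_simps)
    then show "((\<lambda>t. ln (f t)) has_vector_derivative f' t / f t) (at t within {x..b})"
      by (simp add: has_real_derivative_iff_has_vector_derivative)
  qed
  then have "integral {x..b} (\<lambda>t. f' t / f t) = ln (f b) - ln (f x)"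
    by (rule integral_unique)
  then have "f b = exp (ln (f x) + integral {x..b} (\<lambda>t. f' t / f t))"
    using pos \<open>x \<le> b\<close> by simp
  then show ?thesis using pos \<open>x \<le> b\<close> by (simp add: exp_add exp_minus field_simps)
qed

lemma crra_pos: "\<theta> < 1 \<Longrightarrow> 0 < w \<Longrightarrow> 0 < crra \<theta> w"
  by (simp add: crra_def)

lemma crra_neg: "\<theta> < 1 \<Longrightarrow> w < 0 \<Longrightarrow> crra \<theta> w < 0"
  by (simp add: crra_def)

lemma ln_crra: "\<theta> < 1 \<Longrightarrow> 0 < w \<Longrightarrow> ln (crra \<theta> w) = (1 - \<theta>) * ln w - ln (1 - \<theta>)"
  by (simp add: crra_def ln_div ln_powr)

lemma quantile_on_eqI:
  assumes "inj_on F {lo..hi}" "x \<in> {lo..hi}" "F x = \<gamma>"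
  shows "quantile_on lo hi F \<gamma> = x"
  unfolding quantile_on_def using assms by (intro the_equality) (auto simp: inj_on_def)

locale crra_equilibrium =
  fixes \<theta> vl vh :: real and n :: nat and F0 f0 D Dp \<beta> g :: "real \<Rightarrow> real"
  assumes vl_less_vh: "vl < vh" and two_le_n: "2 \<le> n"
    and theta: "0 \<le> \<theta>" "\<theta> < 1"
    and F0: "C1_cdf_on vl vh F0 f0" and f0_pos: "\<And>v. v \<in> {vl..vh} \<Longrightarrow> 0 < f0 v"
    and D_deriv: "\<And>\<gamma>. \<gamma> \<in> {0..1} \<Longrightarrow> (D has_real_derivative Dp \<gamma>) (at \<gamma> within {0..1})"
    and Dp_cont: "continuous_on {0..1} Dp" and D_mono: "strict_mono_on {0..1} D"
    and D_0: "D 0 = 0" and D_1: "D 1 = 1" and Dp_0_pos: "0 < Dp 0"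
    and equilibrium: "sym_equilibrium \<theta> vl vh F0 D n \<beta>"
    and g_deriv: "\<And>b. b \<in> {\<beta> vl..\<beta> vh} \<Longrightarrow>
       (bid_cdf F0 vl vh \<beta> has_real_derivative g b) (at b within {\<beta> vl..\<beta> vh})"
    and g_pos: "\<And>b. b \<in> {\<beta> vl..\<beta> vh} \<Longrightarrow> 0 < g b"
    and g_cont: "continuous_on {\<beta> vl..\<beta> vh} g"
begin

lemma F0_vl: "F0 vl = 0" and F0_vh: "F0 vh = 1" and F0_mono: "strict_mono_on {vl..vh} F0"
  and F0_deriv: "\<And>x. x \<in> {vl..vh} \<Longrightarrow> (F0 has_real_derivative f0 x) (at x within {vl..vh})"
  using F0 unfolding C1_cdf_on_def by auto

lemma \<beta>_mono: "strict_mono_on {vl..vh} \<beta>"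
  and \<beta>_differentiable: "\<And>x. x \<in> {vl..vh} \<Longrightarrow> \<beta> differentiable (at x within {vl..vh})"
  and best_response: "\<And>v x. v \<in> {vl..vh} \<Longrightarrow> x \<in> {vl..vh} \<Longrightarrow>
        crra \<theta> (v - \<beta> x) * D (F0 x) ^ (n - 1) \<le> crra \<theta> (v - \<beta> v) * D (F0 v) ^ (n - 1)"
  using equilibrium unfolding sym_equilibrium_def by auto

lemma F0_cont: "continuous_on {vl..vh} F0"
  using F0_deriv DERIV_continuous continuous_on_eq_continuous_within by blast

lemma \<beta>_cont: "continuous_on {vl..vh} \<beta>"
  using \<beta>_differentiable differentiable_imp_continuous_within continuous_on_eq_continuous_within
  by blast

lemma D_cont: "continuous_on {0..1} D"
  using D_deriv DERIV_continuous continuous_on_eq_continuous_within by blast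

lemma F0_in_unit: "x \<in> {vl..vh} \<Longrightarrow> F0 x \<in> {0..1}"
  using strict_mono_on_leD[OF F0_mono, of vl x] strict_mono_on_leD[OF F0_mono, of x vh]
    F0_vl F0_vh by auto

lemma F0_pos: "x \<in> {vl<..vh} \<Longrightarrow> 0 < F0 x"
  using strict_mono_onD[OF F0_mono, of vl x] F0_vl vl_less_vh by auto

lemma F0_inj: "inj_on F0 {vl..vh}"
  using F0_mono strict_mono_on_imp_inj_on by blast

lemma D_pos: "\<gamma> \<in> {0<..1} \<Longrightarrow> 0 < D \<gamma>"
  using strict_mono_onD[OF D_mono, of 0 \<gamma>] D_0 by auto

lemma win_prob_pos: "x \<in> {vl<..vh} \<Longrightarrow> 0 < D (F0 x) ^ (n - 1)"
  using D_pos F0_pos F0_in_unit by auto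

lemma payoff_vl: "crra \<theta> w * D (F0 vl) ^ (n - 1) = 0"
  using F0_vl D_0 two_le_n by simp

lemma quantile_F0:
  assumes "\<gamma> \<in> {0..1}"
  shows "quantile_on vl vh F0 \<gamma> \<in> {vl..vh}" "F0 (quantile_on vl vh F0 \<gamma>) = \<gamma>"
proof -
  obtain x where "x \<in> {vl..vh}" "F0 x = \<gamma>"
    using IVT'[of F0 vl \<gamma> vh] F0_vl F0_vh F0_cont assms vl_less_vh by auto
  then show "quantile_on vl vh F0 \<gamma> \<in> {vl..vh}" "F0 (quantile_on vl vh F0 \<gamma>) = \<gamma>"
    using quantile_on_eqI[OF F0_inj] by auto
qed

lemma \<beta>_in_range: "x \<in> {vl..vh} \<Longrightarrow> \<beta> x \<in> {\<beta> vl..\<beta> vh}"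
  using strict_mono_on_leD[OF \<beta>_mono, of vl x] strict_mono_on_leD[OF \<beta>_mono, of x vh] by auto

lemma bid_cdf_\<beta>: assumes "x \<in> {vl..vh}" shows "bid_cdf F0 vl vh \<beta> (\<beta> x) = F0 x"
proof (cases "x = vh")
  case True then show ?thesis using F0_vh strict_mono_onD[OF \<beta>_mono, of vl vh] vl_less_vh
    by (simp add: bid_cdf_def)
next
  case False
  then have "\<beta> x < \<beta> vh" using strict_mono_onD[OF \<beta>_mono, of x vh] assms by auto
  then show ?thesis
    using \<beta>_in_range[OF assms] the_inv_into_f_f[OF strict_mono_on_imp_inj_on[OF \<beta>_mono] assms]
    by (simp add: bid_cdf_def)
qed

lemma \<beta>_image: "\<beta> ` {vl..vh} = {\<beta> vl..\<beta> vh}"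
proof
  show "{\<beta> vl..\<beta> vh} \<subseteq> \<beta> ` {vl..vh}"
  proof
    fix b assume "b \<in> {\<beta> vl..\<beta> vh}"
    then obtain x where "vl \<le> x" "x \<le> vh" "\<beta> x = b"
      using IVT'[of \<beta> vl b vh, OF _ _ _ \<beta>_cont] vl_less_vh by auto
    then show "b \<in> \<beta> ` {vl..vh}" by auto
  qed
qed (use \<beta>_in_range in blast)

lemma bid_quantile_eq:
  assumes "\<gamma> \<in> {0..1}"
  shows "bid_quantile F0 vl vh \<beta> \<gamma> = \<beta> (quantile_on vl vh F0 \<gamma>)"
proof -
  have "inj_on (bid_cdf F0 vl vh \<beta>) (\<beta> ` {vl..vh})"
    using F0_inj bid_cdf_\<beta> by (auto simp: inj_on_def)
  then have "inj_on (bid_cdf F0 vl vh \<beta>) {\<beta> vl..\<beta> vh}" by (simp only: \<beta>_image)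
  then show ?thesis
    unfolding bid_quantile_def
    by (rule quantile_on_eqI) (use quantile_F0[OF assms] \<beta>_in_range bid_cdf_\<beta> in auto)
qed

lemma bid_le_value: assumes "x \<in> {vl<..vh}" shows "\<beta> x \<le> x"
proof (rule ccontr)
  assume "\<not> \<beta> x \<le> x"
  then have "crra \<theta> (x - \<beta> x) * D (F0 x) ^ (n - 1) < 0"
    using crra_neg[OF theta(2)] win_prob_pos[OF assms] by (simp add: mult_neg_pos)
  moreover have "crra \<theta> (x - \<beta> vl) * D (F0 vl) ^ (n - 1)
      \<le> crra \<theta> (x - \<beta> x) * D (F0 x) ^ (n - 1)"
    using best_response[of x vl] assms vl_less_vh by auto
  ultimately show False using payoff_vl[of "x - \<beta> vl"] by linarith
qed

lemma bid_ge_vl: assumes "x \<in> {vl<..vh}" shows "vl \<le> \<beta> x"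
proof (rule ccontr)
  assume "\<not> vl \<le> \<beta> x"
  then have "0 < crra \<theta> (vl - \<beta> x) * D (F0 x) ^ (n - 1)"
    using crra_pos[OF theta(2)] win_prob_pos[OF assms] by simp
  moreover have "crra \<theta> (vl - \<beta> x) * D (F0 x) ^ (n - 1)
      \<le> crra \<theta> (vl - \<beta> vl) * D (F0 vl) ^ (n - 1)"
    using best_response[of vl x] assms vl_less_vh by auto
  ultimately show False using payoff_vl[of "vl - \<beta> vl"] by linarith
qed

lemma \<beta>_vl: "\<beta> vl = vl"
proof -
  have vl: "vl \<in> {vl..vh}" using vl_less_vh by simp
  have "0 \<le> vl - \<beta> vl"
    using nonneg_on_Icc_if_nonneg_on_Ioo[OF vl_less_vh _ _ vl, of "\<lambda>x. x - \<beta> x"]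
      bid_le_value continuous_on_diff[OF continuous_on_id \<beta>_cont] by auto
  moreover have "0 \<le> \<beta> vl - vl"
    using nonneg_on_Icc_if_nonneg_on_Ioo[OF vl_less_vh _ _ vl, of "\<lambda>x. \<beta> x - vl"]
      bid_ge_vl continuous_on_diff[OF \<beta>_cont continuous_on_const] by auto
  ultimately show ?thesis by simp
qed

text \<open>If \<open>\<beta> v = v\<close>, type v earns nothing, whereas mimicking a lower type earns a positive payoff.\<close>
lemma bid_less_value: assumes v: "v \<in> {vl<..vh}" shows "\<beta> v < v"
proof (rule ccontr)
  assume "\<not> \<beta> v < v"
  then have bv: "\<beta> v = v" using bid_le_value[OF v] by simp
  define x where "x = (vl + v) / 2"
  have x: "x \<in> {vl<..vh}" "x < v" using v by (auto simp: x_def)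
  then have "\<beta> x < v" using strict_mono_onD[OF \<beta>_mono, of x v] v bv by auto
  then have "0 < crra \<theta> (v - \<beta> x) * D (F0 x) ^ (n - 1)"
    using crra_pos[OF theta(2)] win_prob_pos[OF x(1)] by simp
  moreover have "crra \<theta> (v - \<beta> x) * D (F0 x) ^ (n - 1)
      \<le> crra \<theta> (v - \<beta> v) * D (F0 v) ^ (n - 1)"
    using best_response[of v x] x v by auto
  ultimately show False using bv by (simp add: crra_def)
qed

lemma \<beta>_deriv:
  assumes v: "v \<in> {vl..vh}"
  shows "(\<beta> has_real_derivative f0 v / g (\<beta> v)) (at v within {vl..vh})"
proof -
  obtain d where d: "(\<beta> has_real_derivative d) (at v within {vl..vh})"
    using \<beta>_differentiable[OF v] real_differentiable_def by blast
  have "(bid_cdf F0 vl vh \<beta> has_real_derivative g (\<beta> v)) (at (\<beta> v) within \<beta> ` {vl..vh})"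
    using g_deriv[OF \<beta>_in_range[OF v]] by (simp add: \<beta>_image)
  from DERIV_image_chain[OF this d]
  have "(F0 has_real_derivative g (\<beta> v) * d) (at v within {vl..vh})"
    by (rule has_field_derivative_transform_within[where d = 1]) (use v bid_cdf_\<beta> in auto)
  then have "g (\<beta> v) * d = f0 v"
    using has_field_derivative_unique F0_deriv[OF v] trivial_limit_within islimpt_Icc[OF vl_less_vh] v
    by blast
  then have "d = f0 v / g (\<beta> v)" using g_pos[OF \<beta>_in_range[OF v]] by (simp add: field_simps)
  then show ?thesis using d by simp
qed

definition log_payoff :: "real \<Rightarrow> real \<Rightarrow> real" where
  "log_payoff v x = (1 - \<theta>) * ln (v - \<beta> x) + real (n - 1) * ln (D (F0 x))"

lemma ln_payoff:
  assumes "x \<in> {vl<..vh}" "\<beta> x < v"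
  shows "ln (crra \<theta> (v - \<beta> x) * D (F0 x) ^ (n - 1)) = log_payoff v x - ln (1 - \<theta>)"
proof -
  have "0 < crra \<theta> (v - \<beta> x)" using crra_pos[OF theta(2)] assms by simp
  moreover have "0 < D (F0 x)" using D_pos F0_pos F0_in_unit assms by auto
  ultimately show ?thesis
    using ln_crra[OF theta(2), of "v - \<beta> x"] assms by (simp add: log_payoff_def ln_mult ln_realpow)
qed

text \<open>Near its own type the payoff is positive, so its logarithm is maximised there too.\<close>
lemma log_payoff_local_max:
  assumes v: "v \<in> {vl<..<vh}"
  shows "\<forall>\<^sub>F y in at v. log_payoff v y \<le> log_payoff v v"
proof -
  define S where "S = {vl<..<vh} \<inter> \<beta> -` {..<v}"
  have "open S"
    unfolding S_def
    by (rule continuous_open_preimage[OF continuous_on_subset[OF \<beta>_cont]]) auto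
  moreover have "v \<in> S" using v bid_less_value by (simp add: S_def)
  moreover have "log_payoff v y \<le> log_payoff v v" if "y \<in> S" for y
  proof -
    have y: "y \<in> {vl<..vh}" "\<beta> y < v" using that by (auto simp: S_def)
    then have "0 < crra \<theta> (v - \<beta> y) * D (F0 y) ^ (n - 1)"
      using crra_pos[OF theta(2)] win_prob_pos by simp
    then have "ln (crra \<theta> (v - \<beta> y) * D (F0 y) ^ (n - 1))
        \<le> ln (crra \<theta> (v - \<beta> v) * D (F0 v) ^ (n - 1))"
      using best_response[of v y] v y by (intro ln_mono) auto
    then show ?thesis using ln_payoff[OF y] ln_payoff[of v v] v bid_less_value[of v] by simp
  qed
  ultimately show ?thesis unfolding eventually_at_topological by blast
qed

lemma log_payoff_deriv:
  assumes v: "v \<in> {vl<..<vh}"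
  shows "(log_payoff v has_real_derivative
     (1 - \<theta>) * (- (f0 v / g (\<beta> v)) / (v - \<beta> v)) + real (n - 1) * (Dp (F0 v) * f0 v / D (F0 v)))
     (at v)"
proof -
  have vI: "v \<in> {vl..vh}" using v by auto
  have F0v: "F0 v \<in> {0<..<1}"
    using F0_pos[of v] strict_mono_onD[OF F0_mono, of v vh] F0_vh v by auto
  have "(\<beta> has_real_derivative f0 v / g (\<beta> v)) (at v)"
    using \<beta>_deriv[OF vI] at_within_Icc_at[of vl v vh] v by simp
  then have "((\<lambda>x. v - \<beta> x) has_real_derivative - (f0 v / g (\<beta> v))) (at v)"
    using DERIV_diff[OF DERIV_const] by fastforce
  from DERIV_chain2[OF DERIV_ln_divide this]
  have d1: "((\<lambda>x. ln (v - \<beta> x)) has_real_derivative - (f0 v / g (\<beta> v)) / (v - \<beta> v)) (at v)"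
    using bid_less_value[of v] v by (simp add: mult.commute)
  have "(D has_real_derivative Dp (F0 v)) (at (F0 v))"
    using D_deriv[of "F0 v"] at_within_Icc_at[of 0 "F0 v" 1] F0v by auto
  moreover have "(F0 has_real_derivative f0 v) (at v)"
    using F0_deriv[OF vI] at_within_Icc_at[of vl v vh] v by simp
  ultimately have "((\<lambda>x. D (F0 x)) has_real_derivative Dp (F0 v) * f0 v) (at v)"
    by (rule DERIV_chain2)
  from DERIV_chain2[OF DERIV_ln_divide this]
  have d2: "((\<lambda>x. ln (D (F0 x))) has_real_derivative Dp (F0 v) * f0 v / D (F0 v)) (at v)"
    using D_pos F0v by simp
  show ?thesis
    unfolding log_payoff_def[abs_def] by (intro DERIV_add DERIV_cmult d1 d2)
qed

lemma first_order_condition_interior: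
  assumes v: "v \<in> {vl<..<vh}"
  shows "(1 - \<theta>) * D (F0 v) = (v - \<beta> v) * (real n - 1) * Dp (F0 v) * g (\<beta> v)"
proof -
  have vI: "v \<in> {vl..vh}" using v by auto
  define w P where "w = v - \<beta> v" and "P = D (F0 v)"
  have "0 < w" using bid_less_value v by (auto simp: w_def)
  have "0 < P" using D_pos F0_pos F0_in_unit v by (auto simp: P_def)
  define L where "L = (1 - \<theta>) * (- (f0 v / g (\<beta> v)) / w) + real (n - 1) * (Dp (F0 v) * f0 v / P)"
  have "(*) L = (\<lambda>h. 0)"
    using has_derivative_local_max[OF log_payoff_deriv[OF v, unfolded has_field_derivative_def]
        log_payoff_local_max[OF v]]
    by (simp add: L_def w_def P_def)
  then have "L = 0" by (metis mult_1_right)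
  then have "f0 v * ((1 - \<theta>) * P) = f0 v * (w * real (n - 1) * Dp (F0 v) * g (\<beta> v))"
    using \<open>0 < w\<close> \<open>0 < P\<close> f0_pos[OF vI] g_pos[OF \<beta>_in_range[OF vI]]
    by (simp add: L_def field_simps)
  then have "(1 - \<theta>) * P = w * real (n - 1) * Dp (F0 v) * g (\<beta> v)"
    using f0_pos[OF vI] by simp
  then show ?thesis using two_le_n by (simp add: P_def w_def of_nat_diff)
qed

lemma F0_image: "F0 ` {vl..vh} \<subseteq> {0..1}"
  using F0_in_unit by blast

lemma DF0_cont: "continuous_on {vl..vh} (\<lambda>x. D (F0 x))"
  using continuous_on_compose2[OF D_cont F0_cont F0_image] .

lemma DpF0_cont: "continuous_on {vl..vh} (\<lambda>x. Dp (F0 x))"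
  using continuous_on_compose2[OF Dp_cont F0_cont F0_image] .

lemma g\<beta>_cont: "continuous_on {vl..vh} (\<lambda>x. g (\<beta> x))"
  using continuous_on_compose2[OF g_cont \<beta>_cont] \<beta>_image by blast

lemma first_order_condition:
  assumes v: "v \<in> {vl..vh}"
  shows "(1 - \<theta>) * D (F0 v) = (v - \<beta> v) * (real n - 1) * Dp (F0 v) * g (\<beta> v)"
  by (rule eq_on_Icc_if_eq_on_Ioo[OF vl_less_vh _ _ first_order_condition_interior v])
    (intro continuous_intros DF0_cont DpF0_cont g\<beta>_cont \<beta>_cont)+

lemma Dp_pos: assumes "\<gamma> \<in> {0..1}" shows "0 < Dp \<gamma>"
proof (cases "\<gamma> = 0")
  case True then show ?thesis using Dp_0_pos by simp
next
  case False
  define v where "v = quantile_on vl vh F0 \<gamma>"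
  have v: "v \<in> {vl<..vh}" "F0 v = \<gamma>"
    using quantile_F0[OF assms] False F0_vl by (auto simp: v_def order_le_less)
  have "0 < (1 - \<theta>) * D (F0 v)" using D_pos[of \<gamma>] assms False theta v(2) by auto
  then have "0 < (v - \<beta> v) * (real n - 1) * Dp \<gamma> * g (\<beta> v)"
    using first_order_condition[of v] v by auto
  then have "0 < Dp \<gamma> * ((v - \<beta> v) * (real n - 1) * g (\<beta> v))" by (simp add: mult_ac)
  moreover have "0 < (v - \<beta> v) * (real n - 1) * g (\<beta> v)"
    using bid_less_value[OF v(1)] two_le_n g_pos \<beta>_in_range v(1) by auto
  ultimately show ?thesis by (rule zero_less_mult_pos2)
qed

text \<open>Both sides of the first-order condition vanish at vl, so their derivatives there agree.\<close>
lemma density_at_lowest_bid: "(real n - 1) * g vl = f0 vl * (real n - \<theta>)"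
proof -
  let ?F = "at vl within {vl..vh}"
  have vl: "vl \<in> {vl..vh}" using vl_less_vh by auto
  have "(D has_real_derivative Dp 0) (at (F0 vl) within F0 ` {vl..vh})"
    unfolding F0_vl by (rule DERIV_subset[OF D_deriv]) (use F0_in_unit in auto)
  from DERIV_image_chain[OF this F0_deriv[OF vl]]
  have lhs: "((\<lambda>x. (1 - \<theta>) * D (F0 x)) has_real_derivative (1 - \<theta>) * (Dp 0 * f0 vl)) ?F"
    by (intro DERIV_cmult) (simp add: o_def)
  have "((\<lambda>x. x - \<beta> x) has_real_derivative 1 - f0 vl / g vl) ?F"
    using DERIV_diff[OF DERIV_ident \<beta>_deriv[OF vl]] \<beta>_vl by simp
  moreover have "continuous ?F (\<lambda>x. (real n - 1) * Dp (F0 x) * g (\<beta> x))"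
    using DpF0_cont g\<beta>_cont vl
    by (auto simp: continuous_on_eq_continuous_within intro!: continuous_intros)
  ultimately have "((\<lambda>x. (x - \<beta> x) * ((real n - 1) * Dp (F0 x) * g (\<beta> x))) has_real_derivative
      (1 - f0 vl / g vl) * ((real n - 1) * Dp 0 * g vl)) ?F"
    using DERIV_mult_vanishing \<beta>_vl F0_vl by fastforce
  then have "((\<lambda>x. (1 - \<theta>) * D (F0 x)) has_real_derivative
      (1 - f0 vl / g vl) * ((real n - 1) * Dp 0 * g vl)) ?F"
    by (rule has_field_derivative_transform_within[where d = 1]) (use vl first_order_condition in \<open>auto simp: mult.assoc\<close>)
  with lhs have "(1 - \<theta>) * (Dp 0 * f0 vl) = (1 - f0 vl / g vl) * ((real n - 1) * Dp 0 * g vl)"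
    using has_field_derivative_unique trivial_limit_within islimpt_Icc[OF vl_less_vh] vl by blast
  moreover have g_vl: "0 < g vl" using g_pos \<beta>_in_range[OF vl] \<beta>_vl by auto
  ultimately have "g vl * (Dp 0 * ((1 - \<theta>) * f0 vl)) = g vl * (Dp 0 * ((g vl - f0 vl) * (real n - 1)))"
    by (simp add: field_simps)
  then have "(1 - \<theta>) * f0 vl = (g vl - f0 vl) * (real n - 1)" using g_vl Dp_0_pos by simp
  then show ?thesis by (simp add: algebra_simps)
qed

lemma value_quantile:
  assumes \<gamma>: "\<gamma> \<in> {0..1}"
  shows "quantile_on vl vh F0 \<gamma> = bid_quantile F0 vl vh \<beta> \<gamma>
     + (1 - \<theta>) * (D \<gamma> / Dp \<gamma>) / ((real n - 1) * g (bid_quantile F0 vl vh \<beta> \<gamma>))"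
proof -
  define v where "v = quantile_on vl vh F0 \<gamma>"
  define A where "A = (real n - 1) * g (\<beta> v)"
  have v: "v \<in> {vl..vh}" "F0 v = \<gamma>" using quantile_F0[OF \<gamma>] by (auto simp: v_def)
  have "0 < A" using two_le_n g_pos \<beta>_in_range[OF v(1)] by (auto simp: A_def)
  have "(1 - \<theta>) * (D \<gamma> / Dp \<gamma>) / A = ((1 - \<theta>) * D \<gamma>) / (A * Dp \<gamma>)" by simp
  also have "\<dots> = (v - \<beta> v) * (A * Dp \<gamma>) / (A * Dp \<gamma>)"
    using first_order_condition[OF v(1)] v(2) by (simp add: A_def mult_ac)
  also have "\<dots> = v - \<beta> v" using \<open>0 < A\<close> Dp_pos[OF \<gamma>] by simp
  finally show ?thesis using bid_quantile_eq[OF \<gamma>] by (simp add: v_def A_def)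
qed

lemma D_eq_exp_integral:
  assumes "\<gamma> \<in> {0<..1}"
  shows "D \<gamma> = exp (- integral {\<gamma>..1} (\<lambda>t. Dp t / D t))"
  using exp_neg_integral_logderiv[of \<gamma> 1 D Dp] DERIV_subset[OF D_deriv] D_pos D_1 assms
  by auto

lemma bid_slope:
  assumes z: "z \<in> {vl<..vh}"
  shows "f0 z / g (\<beta> z) = (real n - 1) * (f0 z * (z - \<beta> z) * Dp (F0 z) / ((1 - \<theta>) * D (F0 z)))"
proof -
  have zI: "z \<in> {vl..vh}" using z by auto
  define w N P G where "w = z - \<beta> z" and "N = real n - 1" and "P = Dp (F0 z)" and "G = g (\<beta> z)"
  have "0 < w" "0 < N" "0 < P" "0 < G"
    using bid_less_value[OF z] two_le_n Dp_pos[OF F0_in_unit[OF zI]] g_pos[OF \<beta>_in_range[OF zI]]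
    by (auto simp: w_def N_def P_def G_def)
  then have "f0 z / G = N * (f0 z * w * P / (w * N * P * G))" by (simp add: field_simps)
  then show ?thesis using first_order_condition[OF zI] by (simp add: w_def N_def P_def G_def)
qed

lemma bid_slope_vl: "f0 vl / g vl = (real n - 1) / (real n - \<theta>)"
proof -
  have "0 < g vl" using g_pos \<beta>_in_range[of vl] \<beta>_vl vl_less_vh by auto
  moreover have "0 < real n - \<theta>" using two_le_n theta by simp
  ultimately have "f0 vl / g vl = (f0 vl * (real n - \<theta>)) / (g vl * (real n - \<theta>))" by simp
  also have "\<dots> = ((real n - 1) * g vl) / (g vl * (real n - \<theta>))"
    using density_at_lowest_bid by simp
  also have "\<dots> = (real n - 1) / (real n - \<theta>)" using \<open>0 < g vl\<close> by simp
  finally show ?thesis .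
qed

end

locale two_crra_equilibria =
  e1: crra_equilibrium \<theta> vl vh n1 F0 f0 D Dp \<beta>1 g1 +
  e2: crra_equilibrium \<theta> vl vh n2 F0 f0 D Dp \<beta>2 g2
  for \<theta> vl vh :: real and n1 n2 :: nat and F0 f0 D Dp \<beta>1 g1 \<beta>2 g2 :: "real \<Rightarrow> real" +
  assumes n1_less_n2: "n1 < n2"
begin

lemma theta_identified:
  "\<theta> = (real n2 * (real n1 - 1) * g1 (\<beta>1 vl) - real n1 * (real n2 - 1) * g2 (\<beta>2 vl))
        / ((real n1 - 1) * g1 (\<beta>1 vl) - (real n2 - 1) * g2 (\<beta>2 vl))"
proof -
  define x1 x2 where "x1 = real n1" and "x2 = real n2"
  have A1: "(x1 - 1) * g1 vl = f0 vl * (x1 - \<theta>)"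
    and A2: "(x2 - 1) * g2 vl = f0 vl * (x2 - \<theta>)"
    using e1.density_at_lowest_bid e2.density_at_lowest_bid by (simp_all add: x1_def x2_def)
  have "x2 * (x1 - 1) * g1 vl - x1 * (x2 - 1) * g2 vl
      = x2 * ((x1 - 1) * g1 vl) - x1 * ((x2 - 1) * g2 vl)" by (simp add: mult.assoc)
  also have "\<dots> = \<theta> * (f0 vl * (x1 - x2))" unfolding A1 A2 by (simp add: algebra_simps)
  finally have num: "x2 * (x1 - 1) * g1 vl - x1 * (x2 - 1) * g2 vl = \<theta> * (f0 vl * (x1 - x2))" .
  have den: "(x1 - 1) * g1 vl - (x2 - 1) * g2 vl = f0 vl * (x1 - x2)"
    unfolding A1 A2 by (simp add: algebra_simps)
  have "f0 vl * (x1 - x2) \<noteq> 0"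
    using e1.f0_pos[of vl] e1.vl_less_vh n1_less_n2 by (simp add: x1_def x2_def)
  then show ?thesis
    using num den e1.\<beta>_vl e2.\<beta>_vl by (simp add: x1_def x2_def)
qed

lemma steeper_at_common_bid:
  assumes z: "z \<in> {vl..vh}" and common: "\<beta>1 z = \<beta>2 z"
  shows "f0 z / g1 (\<beta>1 z) < f0 z / g2 (\<beta>2 z)"
proof (cases "z = vl")
  case True
  have "\<theta> * (real n2 - real n1) < 1 * (real n2 - real n1)"
    using n1_less_n2 e1.theta by (intro mult_strict_right_mono) auto
  then have "(real n1 - 1) * (real n2 - \<theta>) < (real n2 - 1) * (real n1 - \<theta>)"
    by (simp add: algebra_simps)
  moreover have "0 < real n1 - \<theta>" "0 < real n2 - \<theta>"
    using n1_less_n2 e1.two_le_n e1.theta by auto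
  ultimately have "(real n1 - 1) / (real n1 - \<theta>) < (real n2 - 1) / (real n2 - \<theta>)"
    by (simp add: divide_simps)
  then show ?thesis using e1.bid_slope_vl e2.bid_slope_vl e1.\<beta>_vl e2.\<beta>_vl True by simp
next
  case False
  then have z': "z \<in> {vl<..vh}" using z by auto
  define K where "K = f0 z * (z - \<beta>1 z) * Dp (F0 z) / ((1 - \<theta>) * D (F0 z))"
  have "0 < K"
    using e1.f0_pos[OF z] e1.bid_less_value[OF z'] e1.Dp_pos[OF e1.F0_in_unit[OF z]]
      e1.D_pos e1.F0_pos[OF z'] e1.F0_in_unit[OF z] e1.theta
    by (auto simp: K_def)
  moreover have "f0 z / g1 (\<beta>1 z) = (real n1 - 1) * K" "f0 z / g2 (\<beta>2 z) = (real n2 - 1) * K"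
    using e1.bid_slope[OF z'] e2.bid_slope[OF z'] common by (simp_all add: K_def)
  moreover have "(real n1 - 1) * K < (real n2 - 1) * K"
    using \<open>0 < K\<close> n1_less_n2 by (intro mult_strict_right_mono) auto
  ultimately show ?thesis by simp
qed

lemma bids_increase:
  assumes "x \<in> {vl<..vh}"
  shows "\<beta>1 x < \<beta>2 x"
proof -
  have "0 < \<beta>2 x - \<beta>1 x"
  proof (rule pos_on_Ioc_if_deriv_pos_at_roots[OF e1.vl_less_vh _ _ _ assms])
    show "continuous_on {vl..vh} (\<lambda>x. \<beta>2 x - \<beta>1 x)"
      by (intro continuous_intros e1.\<beta>_cont e2.\<beta>_cont)
    show "\<beta>2 vl - \<beta>1 vl = 0" using e1.\<beta>_vl e2.\<beta>_vl by simp
    fix z assume z: "z \<in> {vl..vh}" and root: "\<beta>2 z - \<beta>1 z = 0"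
    have "0 < f0 z / g2 (\<beta>2 z) - f0 z / g1 (\<beta>1 z)"
      using steeper_at_common_bid[OF z] root by simp
    with DERIV_diff[OF e2.\<beta>_deriv[OF z] e1.\<beta>_deriv[OF z]]
    show "((\<lambda>x. \<beta>2 x - \<beta>1 x) has_real_derivative f0 z / g2 (\<beta>2 z) - f0 z / g1 (\<beta>1 z))
        (at z within {vl..vh}) \<and> 0 < f0 z / g2 (\<beta>2 z) - f0 z / g1 (\<beta>1 z)" by blast
  qed
  then show ?thesis by simp
qed

lemma D_div_Dp_identified:
  assumes \<gamma>: "\<gamma> \<in> {0..1}"
  shows "D \<gamma> / Dp \<gamma> =
    (bid_quantile F0 vl vh \<beta>2 \<gamma> - bid_quantile F0 vl vh \<beta>1 \<gamma>) / (1 - \<theta>)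
    * inverse (1 / ((real n1 - 1) * g1 (bid_quantile F0 vl vh \<beta>1 \<gamma>))
               - 1 / ((real n2 - 1) * g2 (bid_quantile F0 vl vh \<beta>2 \<gamma>)))"
proof -
  define b1 b2 where "b1 = bid_quantile F0 vl vh \<beta>1 \<gamma>" and "b2 = bid_quantile F0 vl vh \<beta>2 \<gamma>"
  define H where "H = D \<gamma> / Dp \<gamma>"
  define A1 A2 where "A1 = (real n1 - 1) * g1 b1" and "A2 = (real n2 - 1) * g2 b2"
  define c where "c = 1 / A1 - 1 / A2"
  have "b2 - b1 = (1 - \<theta>) * H / A1 - (1 - \<theta>) * H / A2"
    using e1.value_quantile[OF \<gamma>, folded b1_def A1_def H_def]
      e2.value_quantile[OF \<gamma>, folded b2_def A2_def H_def] by simp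
  then have gap: "b2 - b1 = (1 - \<theta>) * H * c" by (simp add: c_def right_diff_distrib)
  have "H = (b2 - b1) / (1 - \<theta>) * inverse c"
  proof (cases "\<gamma> = 0")
    case True
    then show ?thesis using gap e1.D_0 by (simp add: H_def)
  next
    case False
    have "quantile_on vl vh F0 \<gamma> \<in> {vl<..vh}"
      using e1.quantile_F0[OF \<gamma>] e1.F0_vl False by (auto simp: order_le_less)
    then have "b1 < b2"
      using bids_increase e1.bid_quantile_eq[OF \<gamma>] e2.bid_quantile_eq[OF \<gamma>] by (simp add: b1_def b2_def)
    then have "c \<noteq> 0" using gap by auto
    then show ?thesis using gap e1.theta by (simp add: field_simps)
  qed
  then show ?thesis by (simp add: H_def c_def A1_def A2_def b1_def b2_def)
qed

end

theorem mainTheorem6: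
  fixes vl vh \<theta> :: real and n1 n2 :: nat
    and F0 f0 Fs fs D Dp :: "real \<Rightarrow> real"
    and \<Gamma> :: "(real \<Rightarrow> real) set"
    and \<beta> g :: "nat \<Rightarrow> real \<Rightarrow> real"
  assumes vlh: "vl < vh"
    and n12: "2 \<le> n1" "n1 < n2"
    and theta: "0 \<le> \<theta>" "\<theta> < 1"
    and F0: "C1_cdf_on vl vh F0 f0" "\<forall>v\<in>{vl..vh}. 0 < f0 v"
    and Fs: "C1_cdf_on vl vh Fs fs" "\<forall>v\<in>{vl..vh}. 0 < fs v"
    and Gamma: "F0 \<in> \<Gamma>" "Fs \<in> \<Gamma>"
      "\<forall>F\<in>\<Gamma>. \<exists>f. C1_cdf_on vl vh F f"
      "\<forall>F\<in>\<Gamma>. \<forall>v\<in>{vl..vh}. Fs v \<le> F v"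
      "\<forall>F\<in>\<Gamma>. \<forall>F'\<in>\<Gamma>. \<forall>t\<in>{0..1}. (\<lambda>v. t * F v + (1 - t) * F' v) \<in> \<Gamma>"
    and D_def: "D = (\<lambda>\<gamma>. Fs (the_inv_into {vl..vh} F0 \<gamma>))"
    and D: "\<forall>\<gamma>\<in>{0..1}. (D has_real_derivative Dp \<gamma>) (at \<gamma> within {0..1})"
      "continuous_on {0..1} Dp" "strict_mono_on {0..1} D"
      "D 0 = 0" "D 1 = 1" "0 < Dp 0"
    and eq: "\<forall>n\<in>{n1, n2}. sym_equilibrium \<theta> vl vh F0 D n (\<beta> n)"
    and dens: "\<forall>n\<in>{n1, n2}. \<forall>b\<in>{\<beta> n vl..\<beta> n vh}.
                 (bid_cdf F0 vl vh (\<beta> n) has_real_derivative g n b) (at b within {\<beta> n vl..\<beta> n vh})"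
      "\<forall>n\<in>{n1, n2}. \<forall>b\<in>{\<beta> n vl..\<beta> n vh}. 0 < g n b"
      "\<forall>n\<in>{n1, n2}. continuous_on {\<beta> n vl..\<beta> n vh} (g n)"
  shows "\<theta> = (real n2 * (real n1 - 1) * g n1 (\<beta> n1 vl) - real n1 * (real n2 - 1) * g n2 (\<beta> n2 vl))
              / ((real n1 - 1) * g n1 (\<beta> n1 vl) - (real n2 - 1) * g n2 (\<beta> n2 vl))
    \<and> (\<forall>\<gamma>\<in>{0..1}. D \<gamma> / Dp \<gamma> =
          (bid_quantile F0 vl vh (\<beta> n2) \<gamma> - bid_quantile F0 vl vh (\<beta> n1) \<gamma>) / (1 - \<theta>)
          * inverse (1 / ((real n1 - 1) * g n1 (bid_quantile F0 vl vh (\<beta> n1) \<gamma>))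
                     - 1 / ((real n2 - 1) * g n2 (bid_quantile F0 vl vh (\<beta> n2) \<gamma>))))
    \<and> (\<forall>\<gamma>\<in>{0<..1}. D \<gamma> = exp (- integral {\<gamma>..1} (\<lambda>t. 1 / (D t / Dp t))))
    \<and> (\<forall>\<gamma>\<in>{0..1}. \<forall>n\<in>{n1, n2}.
          quantile_on vl vh F0 \<gamma> = bid_quantile F0 vl vh (\<beta> n) \<gamma>
             + (1 - \<theta>) * (D \<gamma> / Dp \<gamma>) / ((real n - 1) * g n (bid_quantile F0 vl vh (\<beta> n) \<gamma>)))"
proof -
  \<comment> \<open>The ambiguity set enters only through D and its stated properties.\<close>
  interpret two_crra_equilibria \<theta> vl vh n1 n2 F0 f0 D Dp "\<beta> n1" "g n1" "\<beta> n2" "g n2"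
    using vlh n12 theta F0 D eq dens by unfold_locales auto
  have "\<forall>\<gamma>\<in>{0<..1}. D \<gamma> = exp (- integral {\<gamma>..1} (\<lambda>t. 1 / (D t / Dp t)))"
    using e1.D_eq_exp_integral by simp
  then show ?thesis
    using theta_identified D_div_Dp_identified e1.value_quantile e2.value_quantile by auto
qed

end
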